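(* Let ${\bf p}=({\bf p}_1,\dots,{\bf p}_n)$ and ${\bf q}=({\bf q}_1,\dots,{\bf q}_m)$ be configurations in $\mathbb R^d$ such that the affine span of ${\bf p}$ is $\mathbb R^d$ and the affine span of ${\bf q}$ is $\mathbb R^d$. (a) If the framework $(K(n,m),{\bf p},{\bf q})$ has an equilibrium stress whose stress matrix $\Omega$ is positive semidefinite of rank $n+m-d-1$, then $(K(n,m),{\bf p},{\bf q})$ is super stable and universally rigid. (b) If $(K(n,m),{\bf p},{\bf q})$ is dimensionally rigid, then it is universally rigid.
   Context: $(K(n,m),{\bf p},{\bf q})$ is the framework with bars joining ${\bf p}_i$ to ${\bf q}_j$ for all $i,j$ (vertices indexed $1,\dots,N$, $N=n+m$). An equilibrium stress of a framework $(G,{\bf p})$ is an assignment of scalars $\omega_{ij}=\omega_{ji}$ to the edges ($\omega_{ij}=0$ for non-edges) with $\sum_i\omega_{ij}({\bf p}_i-{\bf p}_j)=0$ for every vertex $j$; its stress matrix $\Omega$ is the $N\times N$ symmetric matrix with off-diagonal entries $-\omega_{ij}$ and diagonal entries chosen so all row sums are zero. A framework is universally rigid if every configuration in any $\mathbb R^D$ with the same edge lengths has all pairwise distances equal to those of the original. A framework whose affine span has dimension $d'$ is dimensionally rigid if every configuration in any $\mathbb R^D$ with the same edge lengths has affine span of dimension at most $d'$. Nonzero vectors ${\bf v}_1,\dots,{\bf v}_k\in\mathbb R^d$ lie on a conic at infinity if there is a nonzero symmetric $d\times d$ matrix $Q$ with ${\bf v}_i^tQ{\bf v}_i=0$ for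 all $i$. A framework with $N$ vertices whose affine span is $\mathbb R^d$ is super stable if it has an equilibrium stress with positive semidefinite stress matrix of rank $N-d-1$ and its edge vectors ${\bf p}_i-{\bf p}_j$ do not lie on a conic at infinity. *)

theory Defs
  imports "HOL-Analysis.Analysis" "Jordan_Normal_Form.DL_Rank"
begin

text \<open>Frameworks on the vertex set {0..<N} (vertex i of the paper is i-1 here),
  with an edge predicate E and a configuration P.\<close>

definition bip_edge :: "nat \<Rightarrow> nat \<Rightarrow> nat \<Rightarrow> nat \<Rightarrow> bool" where
  "bip_edge n m i j \<longleftrightarrow> (i < n \<and> n \<le> j \<and> j < n + m) \<or> (j < n \<and> n \<le> i \<and> i < n + m)"

definition bip_conf :: "nat \<Rightarrow> (nat \<Rightarrow> 'a) \<Rightarrow> (nat \<Rightarrow> 'a) \<Rightarrow> nat \<Rightarrow> 'a" where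
  "bip_conf n p q i = (if i < n then p i else q (i - n))"

definition is_equilibrium_stress ::
  "nat \<Rightarrow> (nat \<Rightarrow> nat \<Rightarrow> bool) \<Rightarrow> (nat \<Rightarrow> 'a::real_vector) \<Rightarrow> (nat \<Rightarrow> nat \<Rightarrow> real) \<Rightarrow> bool" where
  "is_equilibrium_stress N E P \<omega> \<longleftrightarrow>
     (\<forall>i<N. \<forall>j<N. \<omega> i j = \<omega> j i) \<and>
     (\<forall>i<N. \<forall>j<N. \<not> E i j \<longrightarrow> \<omega> i j = 0) \<and>
     (\<forall>j<N. (\<Sum>i<N. \<omega> i j *\<^sub>R (P i - P j)) = 0)"

definition stress_matrix :: "nat \<Rightarrow> (nat \<Rightarrow> nat \<Rightarrow> real) \<Rightarrow> real mat" where
  "stress_matrix N \<omega> =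
     mat N N (\<lambda>(i, j). if i = j then (\<Sum>k\<in>{..<N} - {i}. \<omega> i k) else - \<omega> i j)"

definition psd_mat :: "nat \<Rightarrow> real mat \<Rightarrow> bool" where
  "psd_mat N A \<longleftrightarrow> A \<in> carrier_mat N N \<and>
     (\<forall>i<N. \<forall>j<N. A $$ (i, j) = A $$ (j, i)) \<and>
     (\<forall>x :: nat \<Rightarrow> real. 0 \<le> (\<Sum>i<N. \<Sum>j<N. x i * A $$ (i, j) * x j))"

definition on_conic_at_infinity :: "(real^'d) set \<Rightarrow> bool" where
  "on_conic_at_infinity V \<longleftrightarrow>
     (\<exists>Q :: real^'d^'d. Q \<noteq> 0 \<and> transpose Q = Q \<and> (\<forall>v\<in>V. v \<bullet> (Q *v v) = 0))"

definition super_stable :: "nat \<Rightarrow> (nat \<Rightarrow> nat \<Rightarrow> bool) \<Rightarrow> (nat \<Rightarrow> real^'d) \<Rightarrow> bool" where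
  "super_stable N E P \<longleftrightarrow>
     affine hull (P ` {..<N}) = UNIV \<and>
     (\<exists>\<omega>. is_equilibrium_stress N E P \<omega> \<and> psd_mat N (stress_matrix N \<omega>) \<and>
          vec_space.rank N (stress_matrix N \<omega>) = N - CARD('d) - 1) \<and>
     \<not> on_conic_at_infinity {P i - P j | i j. i < N \<and> j < N \<and> E i j \<and> P i \<noteq> P j}"

text \<open>Points of R^D are represented as functions nat => real, of which only the
  coordinates 0..<D are used.\<close>
definition sqd :: "nat \<Rightarrow> (nat \<Rightarrow> real) \<Rightarrow> (nat \<Rightarrow> real) \<Rightarrow> real" where
  "sqd D x y = (\<Sum>k<D. (x k - y k)^2)"

definition universally_rigid :: "nat \<Rightarrow> (nat \<Rightarrow> nat \<Rightarrow> bool) \<Rightarrow> (nat \<Rightarrow> 'a::real_normed_vector) \<Rightarrow> bool" where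
  "universally_rigid N E P \<longleftrightarrow>
     (\<forall>(D::nat) (x :: nat \<Rightarrow> nat \<Rightarrow> real).
        (\<forall>i<N. \<forall>j<N. E i j \<longrightarrow> sqd D (x i) (x j) = (norm (P i - P j))^2) \<longrightarrow>
        (\<forall>i<N. \<forall>j<N. sqd D (x i) (x j) = (norm (P i - P j))^2))"

text \<open>Dimension of the affine span of x_0,...,x_{N-1} in R^D: the dimension of the span
  of x_i - x_0, i.e. the rank of the D x N matrix with these columns (-1 if N = 0).\<close>
definition conf_aff_dim :: "nat \<Rightarrow> nat \<Rightarrow> (nat \<Rightarrow> nat \<Rightarrow> real) \<Rightarrow> int" where
  "conf_aff_dim D N x =
     (if N = 0 then -1 else int (vec_space.rank D (mat D N (\<lambda>(k, i). x i k - x 0 k))))"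

definition dimensionally_rigid :: "nat \<Rightarrow> (nat \<Rightarrow> nat \<Rightarrow> bool) \<Rightarrow> (nat \<Rightarrow> 'a::euclidean_space) \<Rightarrow> bool" where
  "dimensionally_rigid N E P \<longleftrightarrow>
     (\<forall>(D::nat) (x :: nat \<Rightarrow> nat \<Rightarrow> real).
        (\<forall>i<N. \<forall>j<N. E i j \<longrightarrow> sqd D (x i) (x j) = (norm (P i - P j))^2) \<longrightarrow>
        conf_aff_dim D N x \<le> aff_dim (P ` {..<N}))"

end

theory Submission
  imports Defs
begin

text \<open>Let x be any configuration with the same edge lengths as P = (p, q). In case (a) the stress
  energy of x equals that of P, namely zero, so by positive semidefiniteness every coordinate of x
  lies in the kernel of the stress matrix; that kernel has dimension d + 1 and already contains 1 and
  the coordinates of P, so x is an affine image x_i = A P_i + b. In case (b) the same conclusion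
  holds because otherwise (P, x) / sqrt 2 would have the same edge lengths and a larger affine span.
  An affine image preserves the edge lengths exactly when the quadric A^T A - I vanishes on all
  edge vectors p_i - q_j; as p and q both affinely span R^d, the only such quadric is 0, which is
  also the conic-at-infinity condition of super stability. Hence A is orthogonal and x is congruent
  to P.\<close>

section \<open>Affine images and congruence\<close>

definition affine_in_conf :: "(nat \<Rightarrow> real) \<Rightarrow> nat \<Rightarrow> (nat \<Rightarrow> 'a::real_inner) \<Rightarrow> bool" where
  "affine_in_conf f N P \<longleftrightarrow> (\<exists>a b. \<forall>i<N. f i = a + b \<bullet> P i)"

definition edge_vectors :: "nat \<Rightarrow> (nat \<Rightarrow> nat \<Rightarrow> bool) \<Rightarrow> (nat \<Rightarrow> 'a::real_vector) \<Rightarrow> 'a set" where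
  "edge_vectors N E P = {P i - P j | i j. i < N \<and> j < N \<and> E i j \<and> P i \<noteq> P j}"

lemma inner_const_on_affine_hull_UNIV:
  fixes \<alpha> :: "'a::euclidean_space"
  assumes "affine hull S = UNIV" and "\<forall>y\<in>S. \<alpha> \<bullet> y = c"
  shows "\<alpha> = 0 \<and> c = 0"
proof -
  have "affine hull S \<subseteq> {y. \<alpha> \<bullet> y = c}"
    using assms(2) by (intro hull_minimal affine_hyperplane) auto
  then have "\<alpha> \<bullet> y = c" for y
    using assms(1) by auto
  from this[of 0] this[of \<alpha>] show ?thesis
    by simp
qed

lemma affine_relation_trivial:
  fixes P :: "nat \<Rightarrow> 'a::euclidean_space"
  assumes hull: "affine hull (P ` {..<N}) = UNIV"
    and nonaffine: "\<not> affine_in_conf f N P"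
    and rel: "\<forall>i<N. \<alpha> * f i + \<beta> + \<gamma> \<bullet> P i = 0"
  shows "\<alpha> = 0 \<and> \<beta> = 0 \<and> \<gamma> = 0"
proof -
  have "\<alpha> = 0"
  proof (rule ccontr)
    assume "\<alpha> \<noteq> 0"
    then have "\<forall>i<N. f i = - \<beta> / \<alpha> + (- 1 / \<alpha>) *\<^sub>R \<gamma> \<bullet> P i"
      using rel by (auto simp: field_simps)
    then show False
      using nonaffine unfolding affine_in_conf_def by blast
  qed
  moreover have "\<forall>y\<in>P ` {..<N}. \<gamma> \<bullet> y = - \<beta>"
    using rel \<open>\<alpha> = 0\<close> by (auto simp: add_eq_0_iff)
  ultimately show ?thesis
    using inner_const_on_affine_hull_UNIV[OF hull, of \<gamma> "- \<beta>"] by auto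
qed

lemma symmetric_matrix_form_commute:
  fixes Q :: "real^'d^'d"
  assumes "transpose Q = Q"
  shows "u \<bullet> (Q *v w) = w \<bullet> (Q *v u)"
  by (metis assms dot_lmul_matrix inner_commute vector_transpose_matrix)

lemma inner_sum_outer_products:
  fixes b :: "nat \<Rightarrow> real^'d"
  shows "v \<bullet> ((\<chi> r s. \<Sum>k<D. b k $ r * b k $ s) *v v) = (\<Sum>k<D. (b k \<bullet> v)^2)"
proof -
  have "v \<bullet> ((\<chi> r s. \<Sum>k<D. b k $ r * b k $ s) *v v)
      = (\<Sum>r\<in>UNIV. \<Sum>s\<in>UNIV. \<Sum>k<D. (b k $ r * v $ r) * (b k $ s * v $ s))"
    by (simp add: inner_vec_def matrix_vector_mult_def sum_distrib_left sum_distrib_right mult_ac)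
  also have "\<dots> = (\<Sum>k<D. \<Sum>r\<in>UNIV. \<Sum>s\<in>UNIV. (b k $ r * v $ r) * (b k $ s * v $ s))"
    by (subst sum.swap, rule sum.cong[OF refl], rule sum.swap)
  also have "\<dots> = (\<Sum>k<D. (b k \<bullet> v)^2)"
    by (simp add: inner_vec_def power2_eq_square sum_product)
  finally show ?thesis .
qed

text \<open>If x is the affine image of P with linear part A, then A^T A - I is a quadric through all
  edge vectors.\<close>
lemma congruent_if_affine_in_conf:
  fixes P :: "nat \<Rightarrow> real^'d" and x :: "nat \<Rightarrow> nat \<Rightarrow> real"
  assumes no_conic: "\<not> on_conic_at_infinity (edge_vectors N E P)"
    and affine: "\<forall>k<D. affine_in_conf (\<lambda>i. x i k) N P"
    and edges: "\<forall>i<N. \<forall>j<N. E i j \<longrightarrow> sqd D (x i) (x j) = (norm (P i - P j))^2"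
  shows "\<forall>i<N. \<forall>j<N. sqd D (x i) (x j) = (norm (P i - P j))^2"
proof -
  obtain a b where ab: "\<forall>k<D. \<forall>i<N. x i k = a k + b k \<bullet> P i"
    using affine unfolding affine_in_conf_def by metis
  define G :: "real^'d^'d" where "G = (\<chi> r s. \<Sum>k<D. b k $ r * b k $ s)"
  define Q where "Q = G - Finite_Cartesian_Product.mat 1"
  have sqd_eq: "sqd D (x i) (x j) = (P i - P j) \<bullet> (G *v (P i - P j))" if "i < N" "j < N" for i j
    unfolding sqd_def G_def inner_sum_outer_products using ab that
    by (intro sum.cong) (auto simp: inner_diff_right inner_commute)
  have Q_form: "v \<bullet> (Q *v v) = v \<bullet> (G *v v) - (norm v)^2" for v
    by (simp add: Q_def matrix_vector_mult_diff_rdistrib inner_diff_right power2_norm_eq_inner)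
  have "transpose Q = Q"
    by (simp add: Q_def G_def transpose_def Finite_Cartesian_Product.mat_def
        Finite_Cartesian_Product.vec_eq_iff mult.commute)
  moreover have "\<forall>v\<in>edge_vectors N E P. v \<bullet> (Q *v v) = 0"
    using edges sqd_eq unfolding edge_vectors_def Q_form by auto
  ultimately have "Q = 0"
    using no_conic unfolding on_conic_at_infinity_def by blast
  then have "G = Finite_Cartesian_Product.mat 1"
    by (simp add: Q_def)
  then show ?thesis
    using sqd_eq by (simp add: power2_norm_eq_inner)
qed

section \<open>Stress matrices\<close>

lemma stress_matrix_carrier: "stress_matrix N \<omega> \<in> carrier_mat N N"
  by (simp add: stress_matrix_def)

lemma stress_matrix_row_sum:
  assumes "j < N"
  shows "(\<Sum>i<N. stress_matrix N \<omega> $$ (j, i) * f i) = (\<Sum>i<N. \<omega> j i * (f j - f i))"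
proof -
  have "(\<Sum>i<N. stress_matrix N \<omega> $$ (j, i) * f i)
      = (\<Sum>k\<in>{..<N} - {j}. \<omega> j k) * f j + (\<Sum>i\<in>{..<N} - {j}. - \<omega> j i * f i)"
    using assms by (simp add: sum.remove[of "{..<N}" j] stress_matrix_def)
  also have "\<dots> = (\<Sum>i\<in>{..<N} - {j}. \<omega> j i * (f j - f i))"
    by (simp add: right_diff_distrib sum_subtractf sum_distrib_right sum_negf)
  also have "\<dots> = (\<Sum>i<N. \<omega> j i * (f j - f i))"
    using assms by (simp add: sum.remove[of "{..<N}" j])
  finally show ?thesis .
qed

lemma stress_energy_eq_quadratic_form:
  assumes sym: "\<forall>i<N. \<forall>j<N. \<omega> i j = \<omega> j i"
  shows "(\<Sum>i<N. \<Sum>j<N. \<omega> i j * (f i - f j)^2)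
       = 2 * (\<Sum>i<N. \<Sum>j<N. f i * stress_matrix N \<omega> $$ (i, j) * f j)"
proof -
  define S where "S = (\<Sum>i<N. \<Sum>j<N. \<omega> i j * (f i * (f i - f j)))"
  have "(\<Sum>i<N. \<Sum>j<N. f i * stress_matrix N \<omega> $$ (i, j) * f j)
      = (\<Sum>i<N. f i * (\<Sum>j<N. stress_matrix N \<omega> $$ (i, j) * f j))"
    by (simp add: sum_distrib_left mult.assoc)
  also have "\<dots> = S"
    unfolding S_def
    by (intro sum.cong refl) (subst stress_matrix_row_sum, simp, simp add: sum_distrib_left mult_ac)
  finally have "(\<Sum>i<N. \<Sum>j<N. f i * stress_matrix N \<omega> $$ (i, j) * f j) = S" .
  moreover have "(\<Sum>i<N. \<Sum>j<N. \<omega> i j * (f j * (f j - f i))) = S"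
    unfolding S_def using sym by (subst sum.swap) (intro sum.cong refl, auto)
  moreover have "(\<Sum>i<N. \<Sum>j<N. \<omega> i j * (f i - f j)^2)
      = S + (\<Sum>i<N. \<Sum>j<N. \<omega> i j * (f j * (f j - f i)))"
    unfolding S_def sum.distrib[symmetric]
    by (intro sum.cong refl) (simp add: algebra_simps power2_eq_square)
  ultimately show ?thesis
    by simp
qed

text \<open>A vector on which a positive semidefinite form vanishes lies in its kernel: otherwise
  the form would be negative at f - t A f for small t > 0.\<close>
lemma psd_mat_kernel:
  assumes psd: "psd_mat N A"
    and zero: "(\<Sum>i<N. \<Sum>j<N. f i * A $$ (i, j) * f j) = 0"
  shows "\<forall>j<N. (\<Sum>i<N. A $$ (j, i) * f i) = 0"
proof (rule ccontr)
  define B where "B x y = (\<Sum>i<N. \<Sum>j<N. x i * A $$ (i, j) * y j)" for x y :: "nat \<Rightarrow> real"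
  define h where "h j = (\<Sum>i<N. A $$ (j, i) * f i)" for j
  define H where "H = (\<Sum>i<N. (h i)^2)"
  define G where "G = B h h"
  assume "\<not> (\<forall>j<N. (\<Sum>i<N. A $$ (j, i) * f i) = 0)"
  then obtain j where "j < N" "h j \<noteq> 0"
    unfolding h_def by auto
  then have "0 < (h j)^2" "(h j)^2 \<le> H"
    unfolding H_def by (auto intro: member_le_sum)
  then have H_pos: "0 < H" by linarith
  have sym: "\<forall>i<N. \<forall>j<N. A $$ (i, j) = A $$ (j, i)"
    and nonneg: "\<And>x. 0 \<le> B x x"
    using psd unfolding psd_mat_def B_def by auto
  have "B h f = H"
    unfolding B_def h_def H_def power2_eq_square
    by (intro sum.cong refl) (simp add: sum_distrib_left mult_ac)
  moreover have "B f h = B h f"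
    unfolding B_def using sym by (subst sum.swap) (intro sum.cong refl, auto simp: mult_ac)
  moreover have "B (\<lambda>i. f i - t * h i) (\<lambda>i. f i - t * h i)
      = B f f - t * B f h - t * B h f + t^2 * B h h" for t
    unfolding B_def
    by (simp add: algebra_simps power2_eq_square sum.distrib sum_subtractf sum_distrib_left)
  moreover have "B f f = 0"
    using zero unfolding B_def .
  ultimately have expand: "B (\<lambda>i. f i - t * h i) (\<lambda>i. f i - t * h i) = t * (t * G - 2 * H)" for t
    unfolding G_def by (simp add: power2_eq_square right_diff_distrib)
  define t where "t = H / (G + 1)"
  have "0 \<le> G"
    unfolding G_def by (rule nonneg)
  with H_pos have "0 < t" "t * G < H"
    unfolding t_def by (simp_all add: field_simps)
  with H_pos have "t * (t * G - 2 * H) < 0"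
    by (simp add: mult_pos_neg)
  with expand show False
    using nonneg[of "\<lambda>i. f i - t * h i"] by simp
qed

lemma equilibrium_stress_kernel:
  fixes P :: "nat \<Rightarrow> real^'d"
  assumes "is_equilibrium_stress N E P \<omega>" and "j < N"
  shows "(\<Sum>i<N. stress_matrix N \<omega> $$ (j, i) * P i $ l) = 0"
proof -
  have "(\<Sum>i<N. stress_matrix N \<omega> $$ (j, i) * P i $ l) = (\<Sum>i<N. \<omega> j i * (P j $ l - P i $ l))"
    using assms(2) by (rule stress_matrix_row_sum)
  also have "\<dots> = (\<Sum>i<N. - (\<omega> i j *\<^sub>R (P i - P j)) $ l)"
    using assms unfolding is_equilibrium_stress_def by (intro sum.cong refl) (simp add: algebra_simps)
  also have "\<dots> = - (\<Sum>i<N. \<omega> i j *\<^sub>R (P i - P j)) $ l"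
    by (simp add: sum_negf)
  also have "\<dots> = 0"
    using assms unfolding is_equilibrium_stress_def by simp
  finally show ?thesis .
qed

lemma norm_power2_vec: "(norm (v :: real^'d))^2 = (\<Sum>l\<in>UNIV. (v $ l)^2)"
  unfolding power2_norm_eq_inner by (simp add: inner_vec_def power2_eq_square)

lemma equilibrium_stress_energy_zero:
  fixes P :: "nat \<Rightarrow> real^'d"
  assumes eq: "is_equilibrium_stress N E P \<omega>"
  shows "(\<Sum>i<N. \<Sum>j<N. \<omega> i j * (norm (P i - P j))^2) = 0"
proof -
  have sym: "\<forall>i<N. \<forall>j<N. \<omega> i j = \<omega> j i"
    using eq unfolding is_equilibrium_stress_def by blast
  have coord: "(\<Sum>i<N. \<Sum>j<N. \<omega> i j * (P i $ l - P j $ l)^2) = 0" for l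
    unfolding stress_energy_eq_quadratic_form[OF sym]
    using equilibrium_stress_kernel[OF eq]
    by (simp add: mult.assoc sum_distrib_left[symmetric])
  have "(\<Sum>i<N. \<Sum>j<N. \<omega> i j * (norm (P i - P j))^2)
      = (\<Sum>i<N. \<Sum>l\<in>UNIV. \<Sum>j<N. \<omega> i j * (P i $ l - P j $ l)^2)"
    by (simp add: norm_power2_vec sum_distrib_left sum.swap[of _ "{..<N}" UNIV])
  also have "\<dots> = (\<Sum>l\<in>UNIV. \<Sum>i<N. \<Sum>j<N. \<omega> i j * (P i $ l - P j $ l)^2)"
    by (rule sum.swap)
  finally show ?thesis
    using coord by simp
qed

text \<open>The stress energy only sees edge lengths, so it vanishes on x as it does on P; since each
  coordinate of x contributes a nonnegative amount, each one lies in the kernel.\<close>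
lemma psd_stress_realisation_kernel:
  fixes P :: "nat \<Rightarrow> real^'d" and x :: "nat \<Rightarrow> nat \<Rightarrow> real"
  assumes eq: "is_equilibrium_stress N E P \<omega>"
    and psd: "psd_mat N (stress_matrix N \<omega>)"
    and edges: "\<forall>i<N. \<forall>j<N. E i j \<longrightarrow> sqd D (x i) (x j) = (norm (P i - P j))^2"
    and "k < D"
  shows "\<forall>j<N. (\<Sum>i<N. stress_matrix N \<omega> $$ (j, i) * x i k) = 0"
proof -
  define energy where "energy k = (\<Sum>i<N. \<Sum>j<N. \<omega> i j * (x i k - x j k)^2)" for k
  have sym: "\<forall>i<N. \<forall>j<N. \<omega> i j = \<omega> j i"
    and non_edge: "\<forall>i<N. \<forall>j<N. \<not> E i j \<longrightarrow> \<omega> i j = 0"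
    using eq unfolding is_equilibrium_stress_def by blast+
  have energy_form: "energy k = 2 * (\<Sum>i<N. \<Sum>j<N. x i k * stress_matrix N \<omega> $$ (i, j) * x j k)" for k
    unfolding energy_def by (rule stress_energy_eq_quadratic_form[OF sym])
  have energy_nonneg: "0 \<le> energy k" for k
    using psd unfolding energy_form psd_mat_def by simp
  have "(\<Sum>k<D. energy k) = (\<Sum>i<N. \<Sum>j<N. \<omega> i j * sqd D (x i) (x j))"
    unfolding energy_def sqd_def sum_distrib_left
    by (subst sum.swap, rule sum.cong[OF refl], rule sum.swap)
  also have "\<dots> = (\<Sum>i<N. \<Sum>j<N. \<omega> i j * (norm (P i - P j))^2)"
    using edges non_edge by (intro sum.cong refl) (metis lessThan_iff mult_zero_left)
  also have "\<dots> = 0"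
    using eq by (rule equilibrium_stress_energy_zero)
  finally have "energy k = 0"
    using energy_nonneg \<open>k < D\<close> by (simp add: sum_nonneg_eq_0_iff)
  then show ?thesis
    using psd by (intro psd_mat_kernel) (simp_all add: energy_form)
qed

section \<open>Rank bounds\<close>

lemma (in vec_space) lincomb_eq_zero_iff:
  assumes "finite A" and "A \<subseteq> carrier_vec n"
  shows "lincomb a A = 0\<^sub>v n \<longleftrightarrow> (\<forall>r<n. (\<Sum>z\<in>A. a z * z $ r) = 0)"
proof -
  have "dim_vec (lincomb a A) = n"
    using assms by (rule lincomb_dim)
  show ?thesis
  proof
    assume "lincomb a A = 0\<^sub>v n"
    then show "\<forall>r<n. (\<Sum>z\<in>A. a z * z $ r) = 0"
      using lincomb_index[OF _ assms(2)] by (metis index_zero_vec(1))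
  next
    assume "\<forall>r<n. (\<Sum>z\<in>A. a z * z $ r) = 0"
    with \<open>dim_vec (lincomb a A) = n\<close> show "lincomb a A = 0\<^sub>v n"
      by (intro eq_vecI) (simp_all add: lincomb_index[OF _ assms(2)])
  qed
qed

lemma (in vec_space) lin_indpt_iff_coordinates:
  assumes fin: "finite A" and carrier: "A \<subseteq> carrier_vec n"
  shows "lin_indpt A \<longleftrightarrow> (\<forall>a. (\<forall>r<n. (\<Sum>z\<in>A. a z * z $ r) = 0) \<longrightarrow> (\<forall>z\<in>A. a z = 0))"
proof (intro iffI allI impI ballI)
  fix a z assume "lin_indpt A" "\<forall>r<n. (\<Sum>z\<in>A. a z * z $ r) = 0" "z \<in> A"
  then show "a z = 0"
    using lin_dep_crit[OF fin subset_refl, where a = a and v = z] lincomb_eq_zero_iff[OF fin carrier] by blast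
next
  assume coords: "\<forall>a. (\<forall>r<n. (\<Sum>z\<in>A. a z * z $ r) = 0) \<longrightarrow> (\<forall>z\<in>A. a z = 0)"
  show "lin_indpt A"
    using fin carrier by (rule finite_lin_indpt2) (use coords lincomb_eq_zero_iff[OF fin carrier] in blast)
qed

lemma (in vec_space) lin_indpt_image_if_independent_family:
  assumes fin: "finite I" and carrier: "v ` I \<subseteq> carrier_vec n"
    and indep: "\<And>c. \<forall>r<n. (\<Sum>s\<in>I. c s * v s $ r) = 0 \<Longrightarrow> \<forall>s\<in>I. c s = 0"
  shows "inj_on v I" and "lin_indpt (v ` I)"
proof -
  show inj: "inj_on v I"
  proof
    fix s s' assume "s \<in> I" "s' \<in> I" "v s = v s'"
    define c :: "_ \<Rightarrow> 'a" where "c t = (if t = s then 1 else 0) - (if t = s' then 1 else 0)" for t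
    have "c t * v t $ r = (if t = s then v s $ r else 0) - (if t = s' then v s' $ r else 0)" for t r
      by (simp add: c_def)
    then have "(\<Sum>t\<in>I. c t * v t $ r) = 0" for r
      using \<open>s \<in> I\<close> \<open>s' \<in> I\<close> \<open>v s = v s'\<close> fin by (simp add: sum_subtractf)
    then have "c s = 0"
      using indep[of c] \<open>s \<in> I\<close> by blast
    then show "s = s'"
      unfolding c_def by (cases "s = s'") simp_all
  qed
  show "lin_indpt (v ` I)"
    unfolding lin_indpt_iff_coordinates[OF finite_imageI[OF fin] carrier]
  proof (intro allI impI)
    fix a assume "\<forall>r<n. (\<Sum>z\<in>v ` I. a z * z $ r) = 0"
    then have "\<forall>r<n. (\<Sum>s\<in>I. a (v s) * v s $ r) = 0"
      by (simp add: sum.reindex[OF inj])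
    then show "\<forall>z\<in>v ` I. a z = 0"
      using indep[of "\<lambda>s. a (v s)"] by blast
  qed
qed

lemma orthogonal_summands_eq_0:
  fixes u w :: "nat \<Rightarrow> real"
  assumes "\<forall>r<N. u r + w r = 0" and "(\<Sum>r<N. u r * w r) = 0"
  shows "\<forall>r<N. u r = 0 \<and> w r = 0"
proof -
  have w_eq: "w r = - u r" if "r < N" for r
    using assms(1) that by (simp add: eq_neg_iff_add_eq_0 add.commute)
  then have "(\<Sum>r<N. (u r)^2) = 0"
    using assms(2) by (simp add: power2_eq_square sum_negf)
  then have "\<forall>r<N. u r = 0"
    by (simp add: sum_nonneg_eq_0_iff)
  with w_eq show ?thesis
    by simp
qed

text \<open>Linear independence of real vectors of dimension N, usable outside the locale vec_space
  (whose scalars range over an arbitrary field, too weak for orthogonality arguments).\<close>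
abbreviation lin_indpt_vecs :: "nat \<Rightarrow> real vec set \<Rightarrow> bool" where
  "lin_indpt_vecs N T \<equiv> \<not> module.lin_dep class_ring (module_vec TYPE(real) N) T"

lemma lin_indpt_vecs_Un_orthogonal:
  fixes S T :: "real vec set"
  assumes carrier: "S \<subseteq> carrier_vec N" "T \<subseteq> carrier_vec N"
    and indpt: "lin_indpt_vecs N S" "lin_indpt_vecs N T"
    and orth: "\<forall>s\<in>S. \<forall>t\<in>T. (\<Sum>r<N. s $ r * t $ r) = 0"
  shows "lin_indpt_vecs N (S \<union> T)" and "S \<inter> T = {}"
proof -
  interpret vec_space "TYPE(real)" N .
  have fin: "finite S" "finite T"
    using li_le_dim(1)[OF fin_dim] carrier indpt by blast+
  have nonzero: "0\<^sub>v N \<notin> S"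
    using zero_nin_lin_indpt[OF carrier(1) indpt(1)] by (metis UNIV_I singletonD zero_neq_one)
  show "S \<inter> T = {}"
  proof (rule ccontr)
    assume "S \<inter> T \<noteq> {}"
    then obtain s where "s \<in> S" "s \<in> T" by blast
    then have "(\<Sum>r<N. (s $ r)^2) = 0"
      using orth by (simp add: power2_eq_square)
    then have "s = 0\<^sub>v N"
      using carrier \<open>s \<in> S\<close> by (intro eq_vecI) (auto simp: sum_nonneg_eq_0_iff)
    then show False
      using nonzero \<open>s \<in> S\<close> by blast
  qed
  have coords: "(\<forall>a. (\<forall>r<N. (\<Sum>z\<in>A. a z * z $ r) = 0) \<longrightarrow> (\<forall>z\<in>A. a z = 0))"
    if "A \<in> {S, T}" for A
    using lin_indpt_iff_coordinates[of A] that fin carrier indpt by auto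
  show "lin_indpt_vecs N (S \<union> T)"
    unfolding lin_indpt_iff_coordinates[OF finite_UnI[OF fin] Un_least[OF carrier]]
  proof (intro allI impI)
    fix a assume zero: "\<forall>r<N. (\<Sum>z\<in>S \<union> T. a z * z $ r) = 0"
    define u where "u r = (\<Sum>z\<in>S. a z * z $ r)" for r
    define w where "w r = (\<Sum>z\<in>T. a z * z $ r)" for r
    have "(\<Sum>r<N. u r * w r) = (\<Sum>r<N. \<Sum>s\<in>S. \<Sum>t\<in>T. a s * a t * (s $ r * t $ r))"
      unfolding u_def w_def sum_product by (simp add: mult_ac)
    also have "\<dots> = (\<Sum>s\<in>S. \<Sum>t\<in>T. \<Sum>r<N. a s * a t * (s $ r * t $ r))"
      by (subst sum.swap, rule sum.cong[OF refl], rule sum.swap)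
    also have "\<dots> = (\<Sum>s\<in>S. \<Sum>t\<in>T. a s * a t * (\<Sum>r<N. s $ r * t $ r))"
      by (simp add: sum_distrib_left)
    also have "\<dots> = 0"
      using orth by simp
    finally have "(\<Sum>r<N. u r * w r) = 0" .
    moreover have "\<forall>r<N. u r + w r = 0"
      using zero \<open>S \<inter> T = {}\<close> fin by (simp add: u_def w_def sum.union_disjoint)
    ultimately have "\<forall>r<N. u r = 0 \<and> w r = 0"
      by (intro orthogonal_summands_eq_0)
    then show "\<forall>z\<in>S \<union> T. a z = 0"
      using coords[of S] coords[of T] unfolding u_def w_def by blast
  qed
qed

lemma rank_add_card_le_if_orthogonal_to_cols:
  fixes A :: "real mat" and T :: "real vec set"
  assumes A: "A \<in> carrier_mat N K"
    and T: "T \<subseteq> carrier_vec N" "lin_indpt_vecs N T"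
    and orth: "\<forall>t\<in>T. \<forall>j<K. (\<Sum>i<N. A $$ (i, j) * t $ i) = 0"
  shows "vec_space.rank N A + card T \<le> N"
proof -
  interpret vec_space "TYPE(real)" N .
  have "lin_indpt {}"
    unfolding lin_dep_def by blast
  then obtain S where S: "maximal S (\<lambda>U. U \<subseteq> set (cols A) \<and> lin_indpt U)"
    using maximal_exists_superset[of "set (cols A)" "\<lambda>U. U \<subseteq> set (cols A) \<and> lin_indpt U" "{}"]
    by auto
  then have S_cols: "S \<subseteq> set (cols A)" and "lin_indpt S"
    unfolding maximal_def by auto
  have S_carrier: "S \<subseteq> carrier_vec N"
    using S_cols A by (auto simp: cols_def)
  have "\<forall>s\<in>S. \<forall>t\<in>T. (\<Sum>r<N. s $ r * t $ r) = 0"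
    using S_cols A orth by (auto simp: cols_def)
  from lin_indpt_vecs_Un_orthogonal[OF S_carrier T(1) \<open>lin_indpt S\<close> T(2) this]
  have "lin_indpt (S \<union> T)" and "S \<inter> T = {}" .
  moreover have "finite S" "finite T"
    using li_le_dim(1)[OF fin_dim] S_carrier T \<open>lin_indpt S\<close> by blast+
  ultimately have "card S + card T \<le> N"
    using li_le_dim(2)[OF fin_dim _ \<open>lin_indpt (S \<union> T)\<close>] S_carrier T(1)
    by (simp add: card_Un_disjoint dim_is_n)
  then show ?thesis
    using rank_card_indpt[OF A S] by simp
qed

lemma rank_ge_card_if_cols_project_onto:
  fixes M :: "real mat" and h :: "'e::finite \<Rightarrow> nat"
  assumes M: "M \<in> carrier_mat R N" and h: "\<forall>e. h e < R"
    and span: "span ((\<lambda>i. \<chi> e. col M i $ h e) ` {..<N}) = UNIV"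
  shows "CARD('e) \<le> vec_space.rank R M"
proof -
  define \<pi> :: "real vec \<Rightarrow> real^'e" where "\<pi> u = (\<chi> e. u $ h e)" for u
  obtain B where B: "B \<subseteq> \<pi> ` col M ` {..<N}" "independent B" "\<pi> ` col M ` {..<N} \<subseteq> span B"
    using maximal_independent_subset[of "\<pi> ` col M ` {..<N}"] by blast
  have "span B = UNIV"
    using span span_mono[OF B(3)] unfolding \<pi>_def image_image by (auto simp: span_span)
  then have card_B: "card B = CARD('e)"
    using dim_span_eq_card_independent[OF B(2)] by simp
  obtain U where U: "U \<subseteq> col M ` {..<N}" "inj_on \<pi> U" "B = \<pi> ` U"
    using B(1) subset_image_inj by metis
  interpret vec_space "TYPE(real)" R .
  have U_cols: "U \<subseteq> set (cols M)" and U_carrier: "U \<subseteq> carrier_vec R"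
    using U(1) M by (auto simp: cols_def)
  have fin: "finite U"
    using U(1) finite_surj by blast
  have "\<forall>u\<in>U. a u = 0" if "\<forall>r<R. (\<Sum>u\<in>U. a u * u $ r) = 0" for a
  proof -
    have "(\<Sum>u\<in>U. a u *\<^sub>R \<pi> u) = 0"
      using that h by (simp add: \<pi>_def Finite_Cartesian_Product.vec_eq_iff sum_component)
    then have "(\<Sum>b\<in>B. a (inv_into U \<pi> b) *\<^sub>R b) = 0"
      using U(2,3) by (simp add: sum.reindex)
    then have "\<forall>b\<in>B. a (inv_into U \<pi> b) = 0"
      using B(2) unfolding independent_explicit by (elim conjE allE impE)
    then show ?thesis
      using U(2,3) by simp
  qed
  then have "lin_indpt U"
    using lin_indpt_iff_coordinates[OF fin U_carrier] by blast
  then have "card U \<le> rank M"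
    by (rule rank_ge_card_indpt[OF M U_cols])
  then show ?thesis
    using card_B U(2,3) by (simp add: card_image)
qed

lemma sum_UNIV_option:
  fixes g :: "'a::finite option \<Rightarrow> 'b::comm_monoid_add"
  shows "(\<Sum>s\<in>UNIV. g s) = g None + (\<Sum>l\<in>UNIV. g (Some l))"
  by (simp add: UNIV_option_conv sum.reindex)

text \<open>The kernel of a matrix whose rank is at least N - d - 1 cannot contain 1, the d coordinate
  vectors of P and a vector f that is not affine in P: these d + 2 vectors would be linearly
  independent, and orthogonal to the column space.\<close>
lemma affine_in_conf_if_kernel:
  fixes P :: "nat \<Rightarrow> real^'d" and A :: "real mat"
  assumes A: "A \<in> carrier_mat N N"
    and hull: "affine hull (P ` {..<N}) = UNIV"
    and kernel_f: "\<forall>j<N. (\<Sum>i<N. A $$ (i, j) * f i) = 0"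
    and kernel_1: "\<forall>j<N. (\<Sum>i<N. A $$ (i, j)) = 0"
    and kernel_P: "\<forall>l. \<forall>j<N. (\<Sum>i<N. A $$ (i, j) * P i $ l) = 0"
    and rank: "N < vec_space.rank N A + CARD('d) + 2"
  shows "affine_in_conf f N P"
proof (rule ccontr)
  assume nonaffine: "\<not> affine_in_conf f N P"
  interpret vec_space "TYPE(real)" N .
  define g :: "'d option option \<Rightarrow> nat \<Rightarrow> real" where
    "g s = (case s of None \<Rightarrow> f | Some None \<Rightarrow> (\<lambda>_. 1) | Some (Some l) \<Rightarrow> (\<lambda>i. P i $ l))" for s
  define v where "v s = vec N (g s)" for s
  have v_carrier: "v ` UNIV \<subseteq> carrier_vec N"
    by (auto simp: v_def)
  have "\<forall>s\<in>UNIV. c s = 0" if "\<forall>r<N. (\<Sum>s\<in>UNIV. c s * v s $ r) = 0" for c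
  proof -
    define \<gamma> :: "real^'d" where "\<gamma> = (\<chi> l. c (Some (Some l)))"
    have "\<forall>i<N. c None * f i + c (Some None) + \<gamma> \<bullet> P i = 0"
      using that by (simp add: v_def g_def sum_UNIV_option \<gamma>_def inner_vec_def add.assoc)
    then have "c None = 0 \<and> c (Some None) = 0 \<and> \<gamma> = 0"
      by (rule affine_relation_trivial[OF hull nonaffine])
    then show ?thesis
      by (metis \<gamma>_def not_None_eq vec_lambda_beta zero_index)
  qed
  from lin_indpt_image_if_independent_family[OF finite v_carrier this]
  have "inj v" "lin_indpt (range v)" by simp_all
  moreover have "\<forall>t\<in>range v. \<forall>j<N. (\<Sum>i<N. A $$ (i, j) * t $ i) = 0"
    using kernel_f kernel_1 kernel_P by (auto simp: v_def g_def split: option.split)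
  ultimately have "vec_space.rank N A + card (range v) \<le> N"
    using rank_add_card_le_if_orthogonal_to_cols[OF A v_carrier] by blast
  then show False
    using rank \<open>inj v\<close> by (simp add: card_image card_UNIV_option)
qed

theorem super_stable_imp_universally_rigid:
  fixes P :: "nat \<Rightarrow> real^'d"
  assumes "super_stable N E P"
  shows "universally_rigid N E P"
proof -
  obtain \<omega> where hull: "affine hull (P ` {..<N}) = UNIV"
    and eq: "is_equilibrium_stress N E P \<omega>"
    and psd: "psd_mat N (stress_matrix N \<omega>)"
    and rank: "vec_space.rank N (stress_matrix N \<omega>) = N - CARD('d) - 1"
    and no_conic: "\<not> on_conic_at_infinity (edge_vectors N E P)"
    using assms unfolding super_stable_def edge_vectors_def by blast
  have col_eq_row: "(\<Sum>i<N. stress_matrix N \<omega> $$ (i, j) * h i) = (\<Sum>i<N. stress_matrix N \<omega> $$ (j, i) * h i)"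
    if "j < N" for j h
    using psd that unfolding psd_mat_def by (intro sum.cong refl) auto
  show ?thesis
    unfolding universally_rigid_def
  proof (rule allI, rule allI, rule impI)
    fix D and x :: "nat \<Rightarrow> nat \<Rightarrow> real"
    assume edges: "\<forall>i<N. \<forall>j<N. E i j \<longrightarrow> sqd D (x i) (x j) = (norm (P i - P j))^2"
    have "affine_in_conf (\<lambda>i. x i k) N P" if "k < D" for k
    proof (rule affine_in_conf_if_kernel[OF stress_matrix_carrier hull])
      show "\<forall>j<N. (\<Sum>i<N. stress_matrix N \<omega> $$ (i, j) * x i k) = 0"
        using psd_stress_realisation_kernel[OF eq psd edges that] col_eq_row by simp
      show "\<forall>j<N. (\<Sum>i<N. stress_matrix N \<omega> $$ (i, j)) = 0"
        using stress_matrix_row_sum[of _ N \<omega> "\<lambda>_. 1"] col_eq_row[of _ "\<lambda>_. 1"] by simp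
      show "\<forall>l. \<forall>j<N. (\<Sum>i<N. stress_matrix N \<omega> $$ (i, j) * P i $ l) = 0"
        using equilibrium_stress_kernel[OF eq] col_eq_row by simp
      show "N < vec_space.rank N (stress_matrix N \<omega>) + CARD('d) + 2"
        using rank by linarith
    qed
    then show "\<forall>i<N. \<forall>j<N. sqd D (x i) (x j) = (norm (P i - P j))^2"
      using congruent_if_affine_in_conf[OF no_conic _ edges] by blast
  qed
qed

lemma sqd_add_dim:
  "sqd (d + D) y y' = sqd d y y' + sqd D (\<lambda>t. y (d + t)) (\<lambda>t. y' (d + t))"
  by (induction D) (simp_all add: sqd_def)

definition stacked_conf ::
  "(nat \<Rightarrow> 'd::finite) \<Rightarrow> (nat \<Rightarrow> real^'d) \<Rightarrow> (nat \<Rightarrow> nat \<Rightarrow> real) \<Rightarrow> nat \<Rightarrow> nat \<Rightarrow> real" where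
  "stacked_conf g P x i t = (if t < CARD('d) then P i $ g t else x i (t - CARD('d))) / sqrt 2"

lemma sqd_stacked_conf:
  fixes P :: "nat \<Rightarrow> real^'d"
  assumes g: "bij_betw g {..<CARD('d)} UNIV"
  shows "sqd (CARD('d) + D) (stacked_conf g P x i) (stacked_conf g P x j)
       = ((norm (P i - P j))^2 + sqd D (x i) (x j)) / 2"
proof -
  have "sqd CARD('d) (stacked_conf g P x i) (stacked_conf g P x j)
      = (\<Sum>t<CARD('d). (P i $ g t - P j $ g t)^2) / 2"
    unfolding sqd_def sum_divide_distrib
    by (intro sum.cong refl) (simp add: stacked_conf_def power_divide diff_divide_distrib[symmetric])
  also have "\<dots> = (norm (P i - P j))^2 / 2"
    using sum.reindex_bij_betw[OF g, of "\<lambda>l. (P i $ l - P j $ l)^2"] by (simp add: norm_power2_vec)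
  moreover have "sqd D (\<lambda>t. stacked_conf g P x i (CARD('d) + t)) (\<lambda>t. stacked_conf g P x j (CARD('d) + t))
      = sqd D (x i) (x j) / 2"
    unfolding sqd_def sum_divide_distrib
    by (intro sum.cong refl) (simp add: stacked_conf_def power_divide diff_divide_distrib[symmetric])
  ultimately show ?thesis
    by (simp add: sqd_add_dim add_divide_distrib)
qed

lemma span_lifted_differences_eq_UNIV:
  fixes P :: "nat \<Rightarrow> real^'d"
  assumes hull: "affine hull (P ` {..<N}) = UNIV"
    and nonaffine: "\<not> affine_in_conf f N P"
  shows "span ((\<lambda>i. \<chi> e. case e of None \<Rightarrow> f i - f 0 | Some l \<Rightarrow> P i $ l - P 0 $ l) ` {..<N}) = UNIV"
    (is "span (?w ` _) = _")
proof (rule ccontr)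
  assume "span (?w ` {..<N}) \<noteq> UNIV"
  then obtain a where "a \<noteq> 0" and orth: "\<forall>z\<in>span (?w ` {..<N}). a \<bullet> z = 0"
    using span_not_UNIV_orthogonal by blast
  define \<gamma> :: "real^'d" where "\<gamma> = (\<chi> l. a $ Some l)"
  have "a \<bullet> ?w i = a $ None * (f i - f 0) + \<gamma> \<bullet> (P i - P 0)" for i
    by (simp add: inner_vec_def sum_UNIV_option \<gamma>_def)
  then have "\<forall>i<N. a $ None * f i + (- a $ None * f 0 - \<gamma> \<bullet> P 0) + \<gamma> \<bullet> P i = 0"
    using orth span_base[of "?w _" "?w ` {..<N}"]
    unfolding inner_diff_right right_diff_distrib by fastforce
  from affine_relation_trivial[OF hull nonaffine this]
  have "a $ e = 0" for e
    unfolding \<gamma>_def by (cases e) (auto simp: Finite_Cartesian_Product.vec_eq_iff)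
  then show False
    using \<open>a \<noteq> 0\<close> by (simp add: Finite_Cartesian_Product.vec_eq_iff)
qed

lemma rank_stacked_conf_gt:
  fixes P :: "nat \<Rightarrow> real^'d" and x :: "nat \<Rightarrow> nat \<Rightarrow> real"
  assumes hull: "affine hull (P ` {..<N}) = UNIV"
    and g: "bij_betw g {..<CARD('d)} UNIV"
    and nonaffine: "\<not> affine_in_conf (\<lambda>i. x i k) N P" and "k < D"
  defines "y \<equiv> stacked_conf g P x"
  shows "CARD('d) < vec_space.rank (CARD('d) + D) (mat (CARD('d) + D) N (\<lambda>(t, i). y i t - y 0 t))"
    (is "_ < vec_space.rank _ ?M")
proof -
  define h :: "'d option \<Rightarrow> nat" where
    "h e = (case e of None \<Rightarrow> CARD('d) + k | Some l \<Rightarrow> inv_into {..<CARD('d)} g l)" for e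
  have h_less: "inv_into {..<CARD('d)} g l < CARD('d)" and g_h: "g (h (Some l)) = l" for l
    using bij_betw_apply[OF bij_betw_inv_into[OF g]] g
    by (simp_all add: h_def bij_betw_def f_inv_into_f)
  then have h: "\<forall>e. h e < CARD('d) + D"
    using \<open>k < D\<close> by (auto simp: h_def split: option.split intro: trans_less_add1)
  define w where "w i = (\<chi> e. case e of None \<Rightarrow> x i k - x 0 k | Some l \<Rightarrow> P i $ l - P 0 $ l)" for i
  have "(\<chi> e. col ?M i $ h e) = (1 / sqrt 2) *\<^sub>R w i" if "i < N" for i
    using that h \<open>k < D\<close> g_h h_less
    by (auto simp: Finite_Cartesian_Product.vec_eq_iff y_def stacked_conf_def w_def h_def
        diff_divide_distrib split: option.split)
  then have "(\<lambda>i. \<chi> e. col ?M i $ h e) ` {..<N} = (\<lambda>z. (1 / sqrt 2) *\<^sub>R z) ` w ` {..<N}"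
    by (auto simp: image_image)
  then have "span ((\<lambda>i. \<chi> e. col ?M i $ h e) ` {..<N}) = UNIV"
    using span_image_scale[of "w ` {..<N}" "\<lambda>_. 1 / sqrt 2"]
      span_lifted_differences_eq_UNIV[OF hull nonaffine] unfolding w_def by simp
  then have "CARD('d option) \<le> vec_space.rank (CARD('d) + D) ?M"
    using rank_ge_card_if_cols_project_onto[of ?M _ N h] h by simp
  then show ?thesis
    by (simp add: card_UNIV_option)
qed

text \<open>If x were not an affine image of P, the configuration (P, x) / sqrt 2, which has the
  same edge lengths, would have an affine span of dimension d + 1.\<close>
lemma affine_in_conf_if_dimensionally_rigid:
  fixes P :: "nat \<Rightarrow> real^'d" and x :: "nat \<Rightarrow> nat \<Rightarrow> real"
  assumes hull: "affine hull (P ` {..<N}) = UNIV"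
    and rigid: "dimensionally_rigid N E P"
    and edges: "\<forall>i<N. \<forall>j<N. E i j \<longrightarrow> sqd D (x i) (x j) = (norm (P i - P j))^2"
    and "k < D"
  shows "affine_in_conf (\<lambda>i. x i k) N P"
proof (rule ccontr)
  assume nonaffine: "\<not> affine_in_conf (\<lambda>i. x i k) N P"
  obtain g where g: "bij_betw g {..<CARD('d)} (UNIV :: 'd set)"
    using ex_bij_betw_nat_finite[of "UNIV :: 'd set"] by (auto simp: atLeast0LessThan)
  define y where "y = stacked_conf g P x"
  have "\<forall>i<N. \<forall>j<N. E i j \<longrightarrow> sqd (CARD('d) + D) (y i) (y j) = (norm (P i - P j))^2"
    using edges by (simp add: y_def sqd_stacked_conf[OF g])
  then have "conf_aff_dim (CARD('d) + D) N y \<le> aff_dim (P ` {..<N})"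
    using rigid unfolding dimensionally_rigid_def by blast
  moreover have "N \<noteq> 0"
    using hull by (auto intro: Nat.gr0I)
  moreover have "aff_dim (P ` {..<N}) = CARD('d)"
    using aff_dim_affine_hull[of "P ` {..<N}"] hull by simp
  ultimately show False
    using rank_stacked_conf_gt[where x = x and k = k, OF hull g nonaffine \<open>k < D\<close>]
    unfolding conf_aff_dim_def y_def by simp
qed

theorem dimensionally_rigid_imp_universally_rigid:
  fixes P :: "nat \<Rightarrow> real^'d"
  assumes hull: "affine hull (P ` {..<N}) = UNIV"
    and no_conic: "\<not> on_conic_at_infinity (edge_vectors N E P)"
    and rigid: "dimensionally_rigid N E P"
  shows "universally_rigid N E P"
  unfolding universally_rigid_def
proof (rule allI, rule allI, rule impI)
  fix D and x :: "nat \<Rightarrow> nat \<Rightarrow> real"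
  assume edges: "\<forall>i<N. \<forall>j<N. E i j \<longrightarrow> sqd D (x i) (x j) = (norm (P i - P j))^2"
  then have "\<forall>k<D. affine_in_conf (\<lambda>i. x i k) N P"
    using affine_in_conf_if_dimensionally_rigid[OF hull rigid] by blast
  from no_conic this edges show "\<forall>i<N. \<forall>j<N. sqd D (x i) (x j) = (norm (P i - P j))^2"
    by (rule congruent_if_affine_in_conf)
qed

section \<open>Complete bipartite frameworks\<close>

lemma orthogonal_to_differences_eq_0:
  fixes P :: "nat \<Rightarrow> 'a::euclidean_space"
  assumes "affine hull (P ` {..<N}) = UNIV" and "\<forall>i<N. v \<bullet> (P i - P 0) = 0"
  shows "v = 0"
proof -
  have "\<forall>y\<in>P ` {..<N}. v \<bullet> y = v \<bullet> P 0"
  proof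
    fix y assume "y \<in> P ` {..<N}"
    then obtain i where "i < N" "y = P i" by blast
    with assms(2) have "v \<bullet> (P i - P 0) = 0" by blast
    with \<open>y = P i\<close> show "v \<bullet> y = v \<bullet> P 0"
      by (simp add: inner_diff_right)
  qed
  from inner_const_on_affine_hull_UNIV[OF assms(1) this] show ?thesis
    by simp
qed

lemma matrix_eq_0_if_annihilates_differences:
  fixes Q :: "real^'n^'m" and q :: "nat \<Rightarrow> real^'n"
  assumes hull: "affine hull (q ` {..<M}) = UNIV" and "\<forall>j<M. Q *v (q j - q 0) = 0"
  shows "Q = 0"
proof -
  have "Q $ r \<bullet> (q j - q 0) = 0" if "j < M" for j r
  proof -
    have "(Q *v (q j - q 0)) $ r = 0"
      using assms(2) that by simp
    then show ?thesis
      by (simp only: matrix_vector_mul_component)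
  qed
  then have "Q $ r = 0" for r
    by (intro orthogonal_to_differences_eq_0[OF hull]) blast
  then show ?thesis
    by (simp add: Finite_Cartesian_Product.vec_eq_iff)
qed

lemma quadric_through_bipartite_differences_eq_0:
  fixes p q :: "nat \<Rightarrow> real^'d" and Q :: "real^'d^'d"
  assumes hp: "affine hull (p ` {..<n}) = UNIV"
    and hq: "affine hull (q ` {..<m}) = UNIV"
    and sym: "transpose Q = Q"
    and isotropic: "\<forall>i<n. \<forall>j<m. (p i - q j) \<bullet> (Q *v (p i - q j)) = 0"
  shows "Q = 0"
proof -
  define B where "B u w = u \<bullet> (Q *v w)" for u w :: "real^'d"
  have B_commute: "B u w = B w u" for u w
    unfolding B_def by (rule symmetric_matrix_form_commute[OF sym])
  have B_diff: "B (u - w) (u' - w') = B u u' - B u w' - B w u' + B w w'" for u w u' w'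
    unfolding B_def by (simp add: algebra_simps inner_diff_left matrix_vector_mult_diff_distrib)
  have "0 < n"
    using hp by (auto intro: Nat.gr0I)
  \<comment> \<open>polarising the four isotropic vectors p i - q j, p i - q 0, p 0 - q j, p 0 - q 0\<close>
  have polar: "B (p i - p 0) (q j - q 0) = 0" if "i < n" "j < m" for i j
  proof -
    have "k < n" "l < m" if "k \<in> {i, 0}" "l \<in> {j, 0}" for k l
      using \<open>i < n\<close> \<open>j < m\<close> \<open>0 < n\<close> that by auto
    then have "B (p k - q l) (p k - q l) = 0" if "k \<in> {i, 0}" "l \<in> {j, 0}" for k l
      using isotropic that unfolding B_def by blast
    from this[of i j] this[of i 0] this[of 0 j] this[of 0 0] show ?thesis
      using B_commute[of "q j" "p i"] B_commute[of "q 0" "p i"]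
        B_commute[of "q j" "p 0"] B_commute[of "q 0" "p 0"]
      by (simp add: B_diff)
  qed
  have "Q *v (q j - q 0) = 0" if "j < m" for j
  proof (rule orthogonal_to_differences_eq_0[OF hp], intro allI impI)
    fix i assume "i < n"
    from polar[OF this that] show "(Q *v (q j - q 0)) \<bullet> (p i - p 0) = 0"
      unfolding B_def by (simp only: inner_commute)
  qed
  then show ?thesis
    by (intro matrix_eq_0_if_annihilates_differences[OF hq]) blast
qed

lemma bip_conf_left [simp]: "i < n \<Longrightarrow> bip_conf n p q i = p i"
  by (simp add: bip_conf_def)

lemma bip_conf_right [simp]: "bip_conf n p q (n + j) = q j"
  by (simp add: bip_conf_def)

lemma affine_hull_bip_conf:
  assumes "affine hull (p ` {..<n}) = UNIV"
  shows "affine hull (bip_conf n p q ` {..<n + m}) = UNIV"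
proof -
  have "p ` {..<n} \<subseteq> bip_conf n p q ` {..<n + m}"
  proof
    fix y assume "y \<in> p ` {..<n}"
    then obtain i where "i < n" "y = p i" by blast
    then show "y \<in> bip_conf n p q ` {..<n + m}"
      by (intro rev_image_eqI[of i]) simp_all
  qed
  then have "affine hull (p ` {..<n}) \<subseteq> affine hull (bip_conf n p q ` {..<n + m})"
    by (rule hull_mono)
  then show ?thesis
    using assms by auto
qed

lemma bip_edge_vectors_not_on_conic:
  fixes p q :: "nat \<Rightarrow> real^'d"
  assumes hp: "affine hull (p ` {..<n}) = UNIV"
    and hq: "affine hull (q ` {..<m}) = UNIV"
  shows "\<not> on_conic_at_infinity (edge_vectors (n + m) (bip_edge n m) (bip_conf n p q))"
proof
  assume "on_conic_at_infinity (edge_vectors (n + m) (bip_edge n m) (bip_conf n p q))"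
  then obtain Q :: "real^'d^'d" where "Q \<noteq> 0" "transpose Q = Q"
    and isotropic: "\<forall>v\<in>edge_vectors (n + m) (bip_edge n m) (bip_conf n p q). v \<bullet> (Q *v v) = 0"
    unfolding on_conic_at_infinity_def by blast
  have "p i - q j \<in> edge_vectors (n + m) (bip_edge n m) (bip_conf n p q)"
    if "i < n" "j < m" "p i \<noteq> q j" for i j
    unfolding edge_vectors_def using that
    by (intro CollectI exI[of _ i] exI[of _ "n + j"]) (simp add: bip_edge_def)
  then have "\<forall>i<n. \<forall>j<m. (p i - q j) \<bullet> (Q *v (p i - q j)) = 0"
    using isotropic by (metis diff_self inner_zero_left)
  with \<open>Q \<noteq> 0\<close> show False
    using quadric_through_bipartite_differences_eq_0[OF hp hq \<open>transpose Q = Q\<close>] by blast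
qed

theorem mainTheorem3:
  fixes p q :: "nat \<Rightarrow> real^'d" and n m :: nat
  assumes "affine hull (p ` {..<n}) = UNIV"
    and "affine hull (q ` {..<m}) = UNIV"
  shows "((\<exists>\<omega>. is_equilibrium_stress (n + m) (bip_edge n m) (bip_conf n p q) \<omega> \<and>
              psd_mat (n + m) (stress_matrix (n + m) \<omega>) \<and>
              vec_space.rank (n + m) (stress_matrix (n + m) \<omega>) = n + m - CARD('d) - 1)
          \<longrightarrow> super_stable (n + m) (bip_edge n m) (bip_conf n p q) \<and>
              universally_rigid (n + m) (bip_edge n m) (bip_conf n p q))
       \<and> (dimensionally_rigid (n + m) (bip_edge n m) (bip_conf n p q)
          \<longrightarrow> universally_rigid (n + m) (bip_edge n m) (bip_conf n p q))"
proof -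
  have hull: "affine hull (bip_conf n p q ` {..<n + m}) = UNIV"
    using assms(1) by (rule affine_hull_bip_conf)
  have no_conic: "\<not> on_conic_at_infinity (edge_vectors (n + m) (bip_edge n m) (bip_conf n p q))"
    using assms by (rule bip_edge_vectors_not_on_conic)
  show ?thesis
    using hull no_conic super_stable_imp_universally_rigid
      dimensionally_rigid_imp_universally_rigid[OF hull no_conic]
    unfolding super_stable_def edge_vectors_def by blast
qed

end
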